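(* Let $2\le k<n$ and let $\pi_\bullet$ be an integral point of the tropical Grassmannian $\mathrm{Trop}\,\mathrm{Gr}(k,n)$ (equivalently, a representative of an integral point of $\mathrm{Trop}\,X(k,n)$). Then there is a weak scaffold $(Q,\mathbf z)$ whose tropical Plücker vector is equal to $\pi_\bullet$ modulo the lineality space $L_{k,n}$.
   Context: $\mathrm{Trop}\,\mathrm{Gr}(k,n)\subset\mathbb R^{\binom{[n]}{k}}$ is the closure of the set of vectors $(\mathrm{val}\,p_I(V))_I$ where $V$ ranges over points of the Grassmannian over Puiseux series all of whose Plücker coordinates $p_I$ are nonzero. The lineality space $L_{k,n}$ is spanned by $\sum_{I\ni i}e^I$, $i\in[n]$; $\mathrm{Trop}\,X(k,n)$ is the quotient by it, and a point is integral if it has a representative in $\mathbb Z^{\binom{[n]}{k}}$. The Dressian $\mathrm{Dr}(k,n)$ is the set of $\pi_\bullet$ such that for every $S\in\binom{[n]}{k-2}$ and $a<b<c<d$ in $[n]\setminus S$ the minimum of $\pi_{Sab}+\pi_{Scd},\pi_{Sac}+\pi_{Sbd},\pi_{Sad}+\pi_{Sbc}$ is attained at least twice. Let $Q$ be a finite loopless directed graph with $\mathbf z=(z_1,\dots,z_n)\in V(Q)^n$ (not necessarily distinct). Directed distance $\delta(v,w)$ is the minimum total length of a walk from $v$ to $w$, where each edge $v\to w$ may be traversed forwards at cost 1 or backwards at cost $k-1$; it is assumed all such distances are finite and that for every edge $v\to w$ one has $\delta(v,w)=1$ and $\delta(w,v)=k-1$. The Fermat–Le distance sum is $\Sigma_Q(I)=\min_{x\in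 V(Q)}\sum_{i\in I}\delta(x,z_i)$ for $I\in\binom{[n]}{k}$, and the tropical Plücker vector of $(Q,\mathbf z)$ is $\pi_I=-\frac1k\Sigma_Q(I)$. A coloring is $c:V(Q)\to\mathbb Z/k$ with $c(w)=c(v)+1$ for each edge $v\to w$. $(Q,\mathbf z)$ is a weak scaffold if its tropical Plücker vector lies in $\mathrm{Dr}(k,n)$ and $Q$ admits a coloring. *)

theory Defs
  imports "HOL-Analysis.Analysis"
          "HOL-Computational_Algebra.Formal_Laurent_Series"
          "HOL-Combinatorics.Permutations"
begin

text \<open>Ground set [n] is rendered as {0..<n}. Vectors in R^(binom [n] k) are
  functions nat set => real; only their values on k-subsets of {0..<n} matter.\<close>

definition ksubsets :: "nat \<Rightarrow> nat \<Rightarrow> nat set set" where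
  "ksubsets k n = {I. I \<subseteq> {0..<n} \<and> card I = k}"

definition nth_elem :: "nat set \<Rightarrow> nat \<Rightarrow> nat" where
  "nth_elem I j = sorted_list_of_set I ! j"

definition minor :: "nat \<Rightarrow> (nat \<Rightarrow> nat \<Rightarrow> 'a::comm_ring_1) \<Rightarrow> nat set \<Rightarrow> 'a" where
  "minor k M I = (\<Sum>p | p permutes {0..<k}.
       of_int (sign p) * (\<Prod>i<k. M i (nth_elem I (p i))))"

text \<open>A matrix over
  Puiseux series has all entries in C((t^(1/N))) for some N >= 1; writing
  s = t^(1/N), the valuation of a Puiseux series equals (1/N) times the order
  (fls_subdegree) in s.\<close>
definition trop_gr_realizable :: "nat \<Rightarrow> nat \<Rightarrow> (nat set \<Rightarrow> real) set" where
  "trop_gr_realizable k n =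
     {\<pi>. \<exists>(N::nat) (M :: nat \<Rightarrow> nat \<Rightarrow> complex fls). N \<ge> 1 \<and>
          (\<forall>I\<in>ksubsets k n. minor k M I \<noteq> 0 \<and>
               \<pi> I = real_of_int (fls_subdegree (minor k M I)) / real N)}"

definition trop_gr :: "nat \<Rightarrow> nat \<Rightarrow> (nat set \<Rightarrow> real) set" where
  "trop_gr k n = {\<pi>. \<forall>\<epsilon>>0. \<exists>\<sigma>\<in>trop_gr_realizable k n.
                        \<forall>I\<in>ksubsets k n. \<bar>\<pi> I - \<sigma> I\<bar> < \<epsilon>}"

text \<open>Element of the lineality space L_{k,n} with coefficients \<lambda>:
  sum_i \<lambda>_i sum_{I containing i} e^I.\<close>
definition lineality_vec :: "(nat \<Rightarrow> real) \<Rightarrow> nat set \<Rightarrow> real" where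
  "lineality_vec c I = (\<Sum>i\<in>I. c i)"

definition equiv_mod_lineality :: "nat \<Rightarrow> nat \<Rightarrow> (nat set \<Rightarrow> real) \<Rightarrow> (nat set \<Rightarrow> real) \<Rightarrow> bool" where
  "equiv_mod_lineality k n \<pi> \<sigma> \<longleftrightarrow>
     (\<exists>lam. \<forall>I\<in>ksubsets k n. \<pi> I = \<sigma> I + lineality_vec lam I)"

definition integral_mod_lineality :: "nat \<Rightarrow> nat \<Rightarrow> (nat set \<Rightarrow> real) \<Rightarrow> bool" where
  "integral_mod_lineality k n \<pi> \<longleftrightarrow>
     (\<exists>lam. \<forall>I\<in>ksubsets k n. \<pi> I + lineality_vec lam I \<in> \<int>)"

definition dressian :: "nat \<Rightarrow> nat \<Rightarrow> (nat set \<Rightarrow> real) set" where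
  "dressian k n = {\<pi>. \<forall>S a b c d. S \<in> ksubsets (k-2) n \<and>
       a < b \<and> b < c \<and> c < d \<and> d < n \<and> a \<notin> S \<and> b \<notin> S \<and> c \<notin> S \<and> d \<notin> S \<longrightarrow>
       (let x = \<pi> (insert a (insert b S)) + \<pi> (insert c (insert d S));
            y = \<pi> (insert a (insert c S)) + \<pi> (insert b (insert d S));
            z = \<pi> (insert a (insert d S)) + \<pi> (insert b (insert c S));
            m = min x (min y z)
        in (x = m \<and> y = m) \<or> (x = m \<and> z = m) \<or> (y = m \<and> z = m))}"

inductive walk_cost :: "nat \<Rightarrow> (nat \<times> nat) set \<Rightarrow> nat \<Rightarrow> nat \<Rightarrow> nat \<Rightarrow> bool"
  for k E where
  nil: "walk_cost k E v v 0"
| fwd: "(v, u) \<in> E \<Longrightarrow> walk_cost k E u w c \<Longrightarrow> walk_cost k E v w (c + 1)"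
| bwd: "(u, v) \<in> E \<Longrightarrow> walk_cost k E u w c \<Longrightarrow> walk_cost k E v w (c + (k - 1))"

definition ddist :: "nat \<Rightarrow> (nat \<times> nat) set \<Rightarrow> nat \<Rightarrow> nat \<Rightarrow> nat" where
  "ddist k E v w = (LEAST c. walk_cost k E v w c)"

definition fl_sum :: "nat \<Rightarrow> nat set \<Rightarrow> (nat \<times> nat) set \<Rightarrow> (nat \<Rightarrow> nat) \<Rightarrow> nat set \<Rightarrow> nat" where
  "fl_sum k V E z I = Min ((\<lambda>x. \<Sum>i\<in>I. ddist k E x (z i)) ` V)"

definition trop_pluecker :: "nat \<Rightarrow> nat set \<Rightarrow> (nat \<times> nat) set \<Rightarrow> (nat \<Rightarrow> nat) \<Rightarrow> nat set \<Rightarrow> real" where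
  "trop_pluecker k V E z I = - real (fl_sum k V E z I) / real k"

definition valid_quiver :: "nat \<Rightarrow> nat \<Rightarrow> nat set \<Rightarrow> (nat \<times> nat) set \<Rightarrow> (nat \<Rightarrow> nat) \<Rightarrow> bool" where
  "valid_quiver k n V E z \<longleftrightarrow>
     finite V \<and> E \<subseteq> V \<times> V \<and> (\<forall>v. (v, v) \<notin> E) \<and> (\<forall>i<n. z i \<in> V) \<and>
     (\<forall>v\<in>V. \<forall>w\<in>V. \<exists>c. walk_cost k E v w c) \<and>
     (\<forall>(v, w)\<in>E. ddist k E v w = 1 \<and> ddist k E w v = k - 1)"

definition has_coloring :: "nat \<Rightarrow> nat set \<Rightarrow> (nat \<times> nat) set \<Rightarrow> bool" where
  "has_coloring k V E \<longleftrightarrow>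
     (\<exists>col :: nat \<Rightarrow> int. \<forall>(v, w)\<in>E. col w mod int k = (col v + 1) mod int k)"

definition weak_scaffold :: "nat \<Rightarrow> nat \<Rightarrow> nat set \<Rightarrow> (nat \<times> nat) set \<Rightarrow> (nat \<Rightarrow> nat) \<Rightarrow> bool" where
  "weak_scaffold k n V E z \<longleftrightarrow>
     valid_quiver k n V E z \<and> trop_pluecker k V E z \<in> dressian k n \<and> has_coloring k V E"

end

theory Submission
  imports Defs "Jordan_Normal_Form.Determinant" "HOL-Combinatorics.List_Permutation"
    "HOL-Library.Nat_Bijection"
begin

text \<open>Points of the tropical Grassmannian satisfy the three-term tropical Pluecker relations:
  for realizable points this follows from the classical three-term relations among maximal
  minors, since the minimal valuation of three nonzero Puiseux series with sum zero is
  attained twice, and the condition is closed. So \<open>\<pi>\<close> lies in the Dressian, which is stable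
  under the lineality space. After a lineality shift, \<open>-\<pi>\<close> becomes a vector \<open>L\<close> of positive
  integers with \<open>M \<le> L\<^sub>I \<le> M + A\<close> and \<open>k A < M\<close>. The quiver has, for every \<open>k\<close>-subset
  \<open>I\<close>, a hub joined to the leaves \<open>z\<^sub>i\<close>, \<open>i \<in> I\<close>, by directed paths of length \<open>L\<^sub>I\<close>. A height
  function shows that edges have distances \<open>1\<close> and \<open>k - 1\<close> and gives the coloring. The hub of
  \<open>J\<close> shows \<open>\<Sigma>\<^sub>Q(J) \<le> k L\<^sub>J\<close>; conversely, potentials bounding the distances to the leaves
  from below add up to at least \<open>k L\<^sub>J\<close> at every vertex, because the lengths are almost
  constant. Hence the tropical Pluecker vector of the quiver is \<open>-L\<close>.\<close>

section \<open>Maximal minors and the three-term Pluecker relations\<close>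

definition det_cols :: "nat \<Rightarrow> (nat \<Rightarrow> 'a::comm_ring_1) list \<Rightarrow> 'a" where
  "det_cols k cs = Determinant.det (Matrix.mat k k (\<lambda>(i, j). (cs ! j) i))"

lemma minor_eq_det_cols:
  assumes "card I = k"
  shows "minor k M I = det_cols k (map (\<lambda>c i. M i c) (sorted_list_of_set I))"
proof -
  have "p i < k" if "p permutes {..<k}" "i < k" for p i
    using that permutes_in_image by fastforce
  then show ?thesis
    using assms
    unfolding minor_def det_cols_def Determinant.det_def
    by (auto simp: atLeast0LessThan nth_elem_def intro!: sum.cong prod.cong)
qed

lemma det_cols_permute_list:
  assumes q: "q permutes {..<k}" and len: "length cs = k"
  shows "det_cols k (permute_list q cs) = signof q * det_cols k cs"
proof -
  define A where "A = Matrix.mat k k (\<lambda>(i, j). (cs ! j) i)"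
  have q': "q permutes {0..<k}"
    using q by (simp add: atLeast0LessThan)
  have AT: "transpose_mat A \<in> carrier_mat k k"
    unfolding A_def by simp
  have "det_cols k (permute_list q cs)
        = Determinant.det (transpose_mat (Matrix.mat k k (\<lambda>(i, j). transpose_mat A $$ (q i, j))))"
    unfolding det_cols_def
    by (rule arg_cong[where f = Determinant.det], rule eq_matI)
      (use len q permutes_in_image[OF q] in \<open>auto simp: A_def permute_list_nth\<close>)
  also have "\<dots> = Determinant.det (Matrix.mat k k (\<lambda>(i, j). transpose_mat A $$ (q i, j)))"
    using det_transpose[of "Matrix.mat k k (\<lambda>(i, j). transpose_mat A $$ (q i, j))" k] by simp
  also have "\<dots> = signof q * Determinant.det (transpose_mat A)"
    by (rule det_permute_rows[OF AT q'])
  also have "Determinant.det (transpose_mat A) = det_cols k cs"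
    using det_transpose[of A k] by (simp add: A_def det_cols_def)
  finally show ?thesis .
qed

lemma det_cols_mset_eq:
  assumes "mset xs = mset ys" "length ys = k"
  shows "det_cols k xs = det_cols k ys \<or> det_cols k xs = - det_cols k ys"
proof -
  obtain q where q: "q permutes {..<length ys}" "permute_list q ys = xs"
    using mset_eq_permutation[OF assms(1)] by blast
  then have "det_cols k xs = signof q * det_cols k ys"
    using det_cols_permute_list assms(2) by blast
  then show ?thesis
    by (auto simp: sign_def)
qed

lemma det_cols_repeated:
  assumes "i < j" "j < k" "cs ! i = cs ! j"
  shows "det_cols k cs = 0"
  unfolding det_cols_def
  by (rule det_identical_columns[of _ k i j]) (use assms in auto)

lemma det_cols_linear:
  fixes ws :: "(nat \<Rightarrow> 'a::comm_ring_1) list"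
  assumes len: "length ws = k - 2" and k: "2 \<le> k"
  shows "\<exists>cof. \<forall>x. det_cols k (ws @ [x, d]) = (\<Sum>i<k. x i * cof i)"
proof -
  define A where "A x = Matrix.mat k k (\<lambda>(i, j). ((ws @ [x, d]) ! j) i)" for x :: "nat \<Rightarrow> 'a"
  have minor_indep: "mat_delete (A x) i (k - 2) = mat_delete (A (\<lambda>_. 0)) i (k - 2)" for x i
  proof -
    have "(ws @ [x, d]) ! j = (ws @ [\<lambda>_. 0, d]) ! j" if "j < k - 2" for j
      using that len by (simp add: nth_append)
    moreover have "(ws @ [x, d]) ! Suc j = (ws @ [\<lambda>_. 0, d]) ! Suc j" if "j < k - 1" "\<not> j < k - 2" for j
      using that len by (simp add: nth_append)
    ultimately show ?thesis
      unfolding mat_delete_def A_def by (intro eq_matI) auto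
  qed
  have "det_cols k (ws @ [x, d]) = (\<Sum>i<k. x i * cofactor (A (\<lambda>_. 0)) i (k - 2))" for x
  proof -
    have "det_cols k (ws @ [x, d]) = (\<Sum>i<k. A x $$ (i, k - 2) * cofactor (A x) i (k - 2))"
      unfolding det_cols_def A_def
      by (rule laplace_expansion_column) (use k in auto)
    also have "\<dots> = (\<Sum>i<k. x i * cofactor (A (\<lambda>_. 0)) i (k - 2))"
    proof (intro sum.cong refl)
      fix i assume "i \<in> {..<k}"
      then have "A x $$ (i, k - 2) = x i"
        using k len by (simp add: A_def nth_append)
      moreover have "cofactor (A x) i (k - 2) = cofactor (A (\<lambda>_. 0)) i (k - 2)"
        unfolding cofactor_def by (metis minor_indep)
      ultimately show "A x $$ (i, k - 2) * cofactor (A x) i (k - 2) = x i * cofactor (A (\<lambda>_. 0)) i (k - 2)"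
        by simp
    qed
    finally show ?thesis .
  qed
  then show ?thesis by (intro exI allI)
qed

lemma nth_take_drop_Suc:
  assumes "m < length vs" "j < length vs - 1"
  shows "(take m vs @ drop (Suc m) vs) ! j = vs ! (if j < m then j else Suc j)"
  using assms by (auto simp: nth_append)

lemma det_cols_alternating_sum_eq_0:
  fixes vs :: "(nat \<Rightarrow> 'a::idom) list"
  assumes len: "length vs = k + 1" and lin: "\<And>x. \<phi> x = (\<Sum>i<k. x i * cof i)"
  shows "(\<Sum>m<k + 1. (-1) ^ m * \<phi> (vs ! m) * det_cols k (take m vs @ drop (Suc m) vs)) = 0"
proof -
  \<comment> \<open>The first row of \<open>N\<close> is a linear combination of the others, so \<open>det N = 0\<close>;
     expanding along that row gives the identity.\<close>
  define N where
    "N = Matrix.mat (k + 1) (k + 1) (\<lambda>(r, m). if r = 0 then \<phi> (vs ! m) else (vs ! m) (r - 1))"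
  have N: "N \<in> carrier_mat (k + 1) (k + 1)"
    unfolding N_def by simp
  define y where "y = vec (k + 1) (\<lambda>r. if r = 0 then 1 else - cof (r - 1))"
  have "transpose_mat N *\<^sub>v y = 0\<^sub>v (k + 1)"
  proof (rule eq_vecI)
    fix m assume "m < dim_vec (0\<^sub>v (k + 1) :: 'a vec)"
    then have m: "m < k + 1" by simp
    have "vec_index (transpose_mat N *\<^sub>v y) m = (\<Sum>r<Suc k. N $$ (r, m) * vec_index y r)"
      using m N by (simp add: mult_mat_vec_def scalar_prod_def y_def atLeast0LessThan)
    also have "\<dots> = \<phi> (vs ! m) - (\<Sum>i<k. (vs ! m) i * cof i)"
      using m by (simp only: sum.lessThan_Suc_shift) (simp add: N_def y_def sum_negf)
    finally show "vec_index (transpose_mat N *\<^sub>v y) m = vec_index (0\<^sub>v (k + 1)) m"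
      using m lin by simp
  qed (simp_all add: y_def N_def)
  moreover have "y \<noteq> 0\<^sub>v (k + 1)"
  proof
    assume "y = 0\<^sub>v (k + 1)"
    then have "vec_index y 0 = 0" by simp
    then show False by (simp add: y_def)
  qed
  moreover have "y \<in> carrier_vec (k + 1)"
    by (simp add: y_def)
  ultimately have "Determinant.det (transpose_mat N) = 0"
    using det_0_iff_vec_prod_zero[of "transpose_mat N" "k + 1"] N by auto
  then have "0 = Determinant.det N"
    using det_transpose[OF N] by simp
  also have "\<dots> = (\<Sum>m<k + 1. N $$ (0, m) * cofactor N 0 m)"
    by (rule laplace_expansion_row[OF N]) simp
  also have "\<dots> = (\<Sum>m<k + 1. (-1) ^ m * \<phi> (vs ! m) * det_cols k (take m vs @ drop (Suc m) vs))"
  proof (intro sum.cong refl)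
    fix m assume "m \<in> {..<k + 1}"
    then have "mat_delete N 0 m = Matrix.mat k k (\<lambda>(i, j). ((take m vs @ drop (Suc m) vs) ! j) i)"
      using len by (intro eq_matI) (auto simp: mat_delete_def N_def nth_take_drop_Suc)
    then show "N $$ (0, m) * cofactor N 0 m
               = (-1) ^ m * \<phi> (vs ! m) * det_cols k (take m vs @ drop (Suc m) vs)"
      using \<open>m \<in> {..<k + 1}\<close> by (simp add: cofactor_def det_cols_def N_def)
  qed
  finally show ?thesis by simp
qed

lemma pluecker_three_term:
  fixes ws :: "(nat \<Rightarrow> 'a::idom) list"
  assumes len: "length ws = k - 2" and k: "2 \<le> k"
  shows "det_cols k (ws @ [a, d]) * det_cols k (ws @ [b, c])
         - det_cols k (ws @ [b, d]) * det_cols k (ws @ [a, c])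
         + det_cols k (ws @ [c, d]) * det_cols k (ws @ [a, b]) = 0"
proof -
  obtain cof where cof: "\<And>x. det_cols k (ws @ [x, d]) = (\<Sum>i<k. x i * cof i)"
    using det_cols_linear[OF len k] by blast
  define K where "K = length ws"
  define vs where "vs = ws @ [a, b, c]"
  define f where
    "f m = (-1) ^ m * det_cols k (ws @ [vs ! m, d]) * det_cols k (take m vs @ drop (Suc m) vs)" for m
  have "(\<Sum>m<k + 1. f m) = 0"
    unfolding f_def by (rule det_cols_alternating_sum_eq_0[OF _ cof]) (use len k in \<open>simp add: vs_def\<close>)
  moreover have "f m = 0" if "m < K" for m
  proof -
    have "det_cols k (ws @ [vs ! m, d]) = 0"
      by (rule det_cols_repeated[of m K]) (use that len k in \<open>auto simp: K_def vs_def nth_append\<close>)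
    then show ?thesis by (simp add: f_def)
  qed
  moreover have "k + 1 = Suc (Suc (Suc K))"
    using len k by (simp add: K_def)
  ultimately have "f K + f (Suc K) + f (Suc (Suc K)) = 0"
    by simp
  then have "(-1) ^ K * (det_cols k (ws @ [a, d]) * det_cols k (ws @ [b, c])
         - det_cols k (ws @ [b, d]) * det_cols k (ws @ [a, c])
         + det_cols k (ws @ [c, d]) * det_cols k (ws @ [a, b])) = 0"
    by (simp add: f_def vs_def K_def nth_append algebra_simps)
  then show ?thesis by simp
qed

section \<open>The tropical three-term relations\<close>

definition min_attained_twice :: "'a::linorder \<Rightarrow> 'a \<Rightarrow> 'a \<Rightarrow> bool" where
  "min_attained_twice x y z \<longleftrightarrow> \<not> (x < y \<and> x < z) \<and> \<not> (y < x \<and> y < z) \<and> \<not> (z < x \<and> z < y)"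

lemma min_attained_twice_iff:
  "(x = min x (min y z) \<and> y = min x (min y z)) \<or> (x = min x (min y z) \<and> z = min x (min y z))
     \<or> (y = min x (min y z) \<and> z = min x (min y z)) \<longleftrightarrow> min_attained_twice x y z"
  unfolding min_attained_twice_def min_def by auto

lemma dressian_iff:
  "\<pi> \<in> dressian k n \<longleftrightarrow>
     (\<forall>S a b c d. S \<in> ksubsets (k - 2) n \<and> a < b \<and> b < c \<and> c < d \<and> d < n \<and>
        a \<notin> S \<and> b \<notin> S \<and> c \<notin> S \<and> d \<notin> S \<longrightarrow>
        min_attained_twice (\<pi> (insert a (insert b S)) + \<pi> (insert c (insert d S)))
                           (\<pi> (insert a (insert c S)) + \<pi> (insert b (insert d S)))
                           (\<pi> (insert a (insert d S)) + \<pi> (insert b (insert c S))))"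
  by (simp only: dressian_def Let_def mem_Collect_eq min_attained_twice_iff)

lemma min_attained_twice_strict_mono:
  assumes "strict_mono f"
  shows "min_attained_twice (f x) (f y) (f z) \<longleftrightarrow> min_attained_twice x y z"
  using assms unfolding min_attained_twice_def by (simp add: strict_mono_less)

lemma min_attained_twice_fls_subdegree:
  fixes x y z :: "'a::idom fls"
  assumes "x \<noteq> 0" "y \<noteq> 0" "z \<noteq> 0" "x + y + z = 0"
  shows "min_attained_twice (fls_subdegree x) (fls_subdegree y) (fls_subdegree z)"
proof -
  have "\<not> (fls_subdegree p < fls_subdegree q \<and> fls_subdegree p < fls_subdegree r)"
    if "p \<noteq> 0" "p + q + r = 0" for p q r :: "'a fls"
  proof
    assume less: "fls_subdegree p < fls_subdegree q \<and> fls_subdegree p < fls_subdegree r"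
    have "q + r = - p"
      using that(2) by (simp add: algebra_simps eq_neg_iff_add_eq_0)
    then have "min (fls_subdegree q) (fls_subdegree r) \<le> fls_subdegree p"
      using fls_plus_subdegree[of q r] that(1) by simp
    then show False
      using less by linarith
  qed
  from this[of x y z] this[of y x z] this[of z x y] show ?thesis
    using assms unfolding min_attained_twice_def by (auto simp: algebra_simps)
qed

lemma min_attained_twice_closed:
  fixes x y z :: real
  assumes approx: "\<And>e. e > 0 \<Longrightarrow> \<exists>x' y' z'. \<bar>x - x'\<bar> < e \<and> \<bar>y - y'\<bar> < e \<and> \<bar>z - z'\<bar> < e
                                    \<and> min_attained_twice x' y' z'"
  shows "min_attained_twice x y z"
proof -
  have "\<not> (p < q \<and> p < r)" if "(p, q, r) \<in> {(x, y, z), (y, x, z), (z, x, y)}" for p q r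
  proof
    assume less: "p < q \<and> p < r"
    define e where "e = min (q - p) (r - p) / 2"
    have "e > 0" "e \<le> (q - p) / 2" "e \<le> (r - p) / 2"
      using less by (auto simp: e_def)
    then obtain x' y' z' where "\<bar>x - x'\<bar> < e" "\<bar>y - y'\<bar> < e" "\<bar>z - z'\<bar> < e"
      and "min_attained_twice x' y' z'"
      using approx by blast
    then show False
      using that less \<open>e \<le> (q - p) / 2\<close> \<open>e \<le> (r - p) / 2\<close>
      unfolding min_attained_twice_def by (auto simp: abs_less_iff)
  qed
  then show ?thesis
    unfolding min_attained_twice_def by blast
qed

lemma ksubsetsD:
  assumes "I \<in> ksubsets k n"
  shows "finite I" "I \<subseteq> {0..<n}" "card I = k"
  using assms unfolding ksubsets_def by (auto intro: finite_subset)

lemma finite_ksubsets: "finite (ksubsets k n)"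
  by (rule finite_subset[of _ "Pow {0..<n}"]) (auto simp: ksubsets_def)

lemma insert2_in_ksubsets:
  assumes "S \<in> ksubsets (k - 2) n" "2 \<le> k" "x \<notin> S" "y \<notin> S" "x \<noteq> y" "x < n" "y < n"
  shows "insert x (insert y S) \<in> ksubsets k n"
  using assms ksubsetsD(1)[OF assms(1)] unfolding ksubsets_def by auto

lemma ksubsets_containing:
  assumes "i < n" "j < n" "2 \<le> k" "k \<le> n"
  obtains I where "I \<in> ksubsets k n" "i \<in> I" "j \<in> I"
proof -
  define B where "B = {i, j}"
  have B: "card B \<le> 2" "B \<subseteq> {0..<n}" "finite B"
    using assms unfolding B_def by (auto simp: card_insert_if)
  then have "k - card B \<le> card ({0..<n} - B)"
    using assms by (simp add: card_Diff_subset)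
  then obtain C where C: "C \<subseteq> {0..<n} - B" "card C = k - card B" "finite C"
    by (rule obtain_subset_with_card_n)
  have "card (B \<union> C) = k"
    using C B assms(3) by (subst card_Un_disjoint) auto
  then have "B \<union> C \<in> ksubsets k n"
    using B C unfolding ksubsets_def by auto
  then show ?thesis
    by (rule that) (auto simp: B_def)
qed

lemma trop_gr_realizable_three_term:
  assumes \<sigma>: "\<sigma> \<in> trop_gr_realizable k n" and k: "2 \<le> k" and S: "S \<in> ksubsets (k - 2) n"
    and abcd: "a < b" "b < c" "c < d" "d < n" "a \<notin> S" "b \<notin> S" "c \<notin> S" "d \<notin> S"
  shows "min_attained_twice (\<sigma> (insert a (insert b S)) + \<sigma> (insert c (insert d S)))
                            (\<sigma> (insert a (insert c S)) + \<sigma> (insert b (insert d S)))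
                            (\<sigma> (insert a (insert d S)) + \<sigma> (insert b (insert c S)))"
proof -
  obtain N :: nat and M :: "nat \<Rightarrow> nat \<Rightarrow> complex fls" where N: "N \<ge> 1" and
    minors: "\<And>I. I \<in> ksubsets k n \<Longrightarrow> minor k M I \<noteq> 0 \<and>
                  \<sigma> I = real_of_int (fls_subdegree (minor k M I)) / real N"
    using \<sigma> unfolding trop_gr_realizable_def by blast
  define col where "col x = (\<lambda>i. M i x)" for x
  define ws where "ws = map col (sorted_list_of_set S)"
  have ws: "length ws = k - 2"
    using ksubsetsD(3)[OF S] by (simp add: ws_def)
  define X where "X x y = det_cols k (ws @ [col x, col y])" for x y
  define val where "val (p :: complex fls) = real_of_int (fls_subdegree p) / real N" for p
  have X: "X x y \<noteq> 0 \<and> \<sigma> (insert x (insert y S)) = val (X x y)"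
    if "x \<in> {a, b, c, d}" "y \<in> {a, b, c, d}" "x \<noteq> y" for x y
  proof -
    have xy: "x \<notin> S" "y \<notin> S" "x < n" "y < n"
      using that abcd by auto
    have I: "insert x (insert y S) \<in> ksubsets k n"
      using insert2_in_ksubsets[OF S k xy(1,2) that(3) xy(3,4)] .
    have "mset (map col (sorted_list_of_set (insert x (insert y S)))) = mset (ws @ [col x, col y])"
      using ksubsetsD(1)[OF S] xy that(3) by (simp add: ws_def mset_set.insert_remove)
    then have "det_cols k (map col (sorted_list_of_set (insert x (insert y S)))) = X x y
               \<or> det_cols k (map col (sorted_list_of_set (insert x (insert y S)))) = - X x y"
      unfolding X_def by (rule det_cols_mset_eq) (use ws k in simp)
    then have "minor k M (insert x (insert y S)) = X x y \<or> minor k M (insert x (insert y S)) = - X x y"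
      using minor_eq_det_cols[OF ksubsetsD(3)[OF I], of M] unfolding col_def by simp
    then show ?thesis
      using minors[OF I] by (auto simp: val_def)
  qed
  have "X a d * X b c - X b d * X a c + X c d * X a b = 0"
    unfolding X_def by (rule pluecker_three_term[OF ws k])
  then have "min_attained_twice (fls_subdegree (X a b * X c d)) (fls_subdegree (- (X a c * X b d)))
                                (fls_subdegree (X a d * X b c))"
    using X abcd by (intro min_attained_twice_fls_subdegree) (auto simp: algebra_simps)
  moreover have "strict_mono (\<lambda>m. real_of_int m / real N)"
    using N by (auto intro!: strict_monoI divide_strict_right_mono)
  ultimately have "min_attained_twice (val (X a b * X c d)) (val (X a c * X b d)) (val (X a d * X b c))"
    unfolding val_def using min_attained_twice_strict_mono[of "\<lambda>m. real_of_int m / real N"] by simp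
  then show ?thesis
    using X abcd by (simp add: val_def add_divide_distrib)
qed

lemma trop_gr_subset_dressian:
  assumes k: "2 \<le> k"
  shows "trop_gr k n \<subseteq> dressian k n"
proof
  fix \<pi> assume \<pi>: "\<pi> \<in> trop_gr k n"
  show "\<pi> \<in> dressian k n"
    unfolding dressian_iff
  proof (intro allI impI)
    fix S a b c d
    assume h: "S \<in> ksubsets (k - 2) n \<and> a < b \<and> b < c \<and> c < d \<and> d < n \<and>
               a \<notin> S \<and> b \<notin> S \<and> c \<notin> S \<and> d \<notin> S"
    let ?s = "\<lambda>\<sigma>::nat set \<Rightarrow> real. \<lambda>w x y z. \<sigma> (insert w (insert x S)) + \<sigma> (insert y (insert z S))"
    show "min_attained_twice (?s \<pi> a b c d) (?s \<pi> a c b d) (?s \<pi> a d b c)"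
    proof (rule min_attained_twice_closed)
      fix e :: real assume "e > 0"
      then have "e / 2 > 0" by simp
      then obtain \<sigma> where \<sigma>: "\<sigma> \<in> trop_gr_realizable k n"
        and close: "\<forall>I\<in>ksubsets k n. \<bar>\<pi> I - \<sigma> I\<bar> < e / 2"
        using \<pi> unfolding trop_gr_def by blast
      have I: "insert x (insert y S) \<in> ksubsets k n"
        if "x \<in> {a, b, c, d}" "y \<in> {a, b, c, d}" "x \<noteq> y" for x y
        using insert2_in_ksubsets[of S k n x y] h k that by auto
      have close_sum: "\<bar>?s \<pi> w x y z - ?s \<sigma> w x y z\<bar> < e"
        if "w \<in> {a, b, c, d}" "x \<in> {a, b, c, d}" "y \<in> {a, b, c, d}" "z \<in> {a, b, c, d}"
          "w \<noteq> x" "y \<noteq> z" for w x y z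
      proof -
        have "\<bar>\<pi> (insert w (insert x S)) - \<sigma> (insert w (insert x S))\<bar> < e / 2"
             "\<bar>\<pi> (insert y (insert z S)) - \<sigma> (insert y (insert z S))\<bar> < e / 2"
          using close I that by blast+
        then show ?thesis by arith
      qed
      have "a \<noteq> b" "a \<noteq> c" "a \<noteq> d" "b \<noteq> c" "b \<noteq> d" "c \<noteq> d"
        using h by auto
      then have "\<bar>?s \<pi> a b c d - ?s \<sigma> a b c d\<bar> < e" "\<bar>?s \<pi> a c b d - ?s \<sigma> a c b d\<bar> < e"
                "\<bar>?s \<pi> a d b c - ?s \<sigma> a d b c\<bar> < e"
        by (simp_all add: close_sum)
      moreover have "min_attained_twice (?s \<sigma> a b c d) (?s \<sigma> a c b d) (?s \<sigma> a d b c)"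
        using trop_gr_realizable_three_term[OF \<sigma> k] h by blast
      ultimately show "\<exists>x' y' z'. \<bar>?s \<pi> a b c d - x'\<bar> < e \<and> \<bar>?s \<pi> a c b d - y'\<bar> < e
                                 \<and> \<bar>?s \<pi> a d b c - z'\<bar> < e \<and> min_attained_twice x' y' z'"
        by blast
    qed
  qed
qed

lemma dressian_add_lineality:
  assumes \<pi>: "\<pi> \<in> dressian k n" and k: "2 \<le> k"
    and \<sigma>: "\<forall>I\<in>ksubsets k n. \<sigma> I = \<pi> I + lineality_vec lam I"
  shows "\<sigma> \<in> dressian k n"
  unfolding dressian_iff
proof (intro allI impI)
  fix S a b c d
  assume h: "S \<in> ksubsets (k - 2) n \<and> a < b \<and> b < c \<and> c < d \<and> d < n \<and>
             a \<notin> S \<and> b \<notin> S \<and> c \<notin> S \<and> d \<notin> S"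
  define shift where "shift = lam a + lam b + lam c + lam d + 2 * sum lam S"
  have \<sigma>_pair: "\<sigma> (insert x (insert y S)) = \<pi> (insert x (insert y S)) + lam x + lam y + sum lam S"
    if "x \<in> {a, b, c, d}" "y \<in> {a, b, c, d}" "x \<noteq> y" for x y
    using \<sigma> insert2_in_ksubsets[of S k n x y] ksubsetsD(1)[of S "k - 2" n] h k that
    by (auto simp: lineality_vec_def)
  have "a \<noteq> b" "a \<noteq> c" "a \<noteq> d" "b \<noteq> c" "b \<noteq> d" "c \<noteq> d"
    using h by auto
  then have "\<sigma> (insert a (insert b S)) + \<sigma> (insert c (insert d S))
               = \<pi> (insert a (insert b S)) + \<pi> (insert c (insert d S)) + shift"
            "\<sigma> (insert a (insert c S)) + \<sigma> (insert b (insert d S))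
               = \<pi> (insert a (insert c S)) + \<pi> (insert b (insert d S)) + shift"
            "\<sigma> (insert a (insert d S)) + \<sigma> (insert b (insert c S))
               = \<pi> (insert a (insert d S)) + \<pi> (insert b (insert c S)) + shift"
    by (simp_all add: \<sigma>_pair shift_def)
  moreover have "strict_mono (\<lambda>x::real. x + shift)"
    by (rule strict_monoI) simp
  ultimately show "min_attained_twice (\<sigma> (insert a (insert b S)) + \<sigma> (insert c (insert d S)))
                                (\<sigma> (insert a (insert c S)) + \<sigma> (insert b (insert d S)))
                                (\<sigma> (insert a (insert d S)) + \<sigma> (insert b (insert c S)))"
    using \<pi> h min_attained_twice_strict_mono[of "\<lambda>x. x + shift"] unfolding dressian_iff by simp
qed

section \<open>Walks and directed distance\<close>

lemma walk_cost_trans: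
  assumes "walk_cost k E x y c1" "walk_cost k E y w c2"
  shows "walk_cost k E x w (c1 + c2)"
  using assms
proof (induction rule: walk_cost.induct)
  case (nil v)
  then show ?case by simp
next
  case (fwd v u w' c)
  then have "walk_cost k E v w ((c + c2) + 1)"
    by (intro walk_cost.fwd) auto
  then show ?case by (simp add: ac_simps)
next
  case (bwd u v w' c)
  then have "walk_cost k E v w ((c + c2) + (k - 1))"
    by (intro walk_cost.bwd) auto
  then show ?case by (simp add: ac_simps)
qed

lemma walk_cost_potential:
  fixes \<phi> :: "nat \<Rightarrow> int"
  assumes pot: "\<And>u v. (u, v) \<in> E \<Longrightarrow> \<phi> u \<le> \<phi> v + 1 \<and> \<phi> v \<le> \<phi> u + int (k - 1)"
    and "walk_cost k E x y c"
  shows "\<phi> x \<le> \<phi> y + int c"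
  using assms(2)
proof (induction rule: walk_cost.induct)
  case (nil v)
  then show ?case by simp
next
  case (fwd v u w c)
  then show ?case using pot[of v u] by simp
next
  case (bwd u v w c)
  then show ?case using pot[of u v] by simp
qed

lemma walk_cost_height:
  fixes h :: "nat \<Rightarrow> int"
  assumes h: "\<And>u v. (u, v) \<in> E \<Longrightarrow> h v = h u + 1"
    and "walk_cost k E x y c"
  shows "k - 1 \<le> c \<or> h y = h x + int c"
  using assms(2)
proof (induction rule: walk_cost.induct)
  case (nil v)
  then show ?case by simp
next
  case (fwd v u w c)
  then show ?case using h[of v u] by auto
next
  case (bwd u v w c)
  then show ?case by simp
qed

lemma ddist_le: "walk_cost k E x y c \<Longrightarrow> ddist k E x y \<le> c"
  unfolding ddist_def by (rule Least_le)

lemma walk_cost_ddist: "walk_cost k E x y c \<Longrightarrow> walk_cost k E x y (ddist k E x y)"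
  unfolding ddist_def by (rule LeastI)

lemma ddist_potential:
  fixes \<phi> :: "nat \<Rightarrow> int"
  assumes "\<And>u v. (u, v) \<in> E \<Longrightarrow> \<phi> u \<le> \<phi> v + 1 \<and> \<phi> v \<le> \<phi> u + int (k - 1)"
    and "walk_cost k E x y c"
  shows "\<phi> x - \<phi> y \<le> int (ddist k E x y)"
  using walk_cost_potential[where \<phi> = \<phi>, OF assms(1) walk_cost_ddist[OF assms(2)]] by simp

lemma min_affine_step:
  fixes a b c t :: int
  assumes "0 \<le> c"
  shows "min (a + c * t) (b - t) \<le> min (a + c * (t + 1)) (b - (t + 1)) + 1 \<and>
         min (a + c * (t + 1)) (b - (t + 1)) \<le> min (a + c * t) (b - t) + c"
  using assms by (auto simp: min_def algebra_simps)

section \<open>The star quiver\<close>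

text \<open>Vertices have to be natural numbers: leaves, hubs and interior path vertices are
  tagged codes, and functions on vertices are defined through \<open>vertex_case\<close>.\<close>

definition leaf :: "nat \<Rightarrow> nat" where
  "leaf i = prod_encode (0, i)"

definition hub :: "nat set \<Rightarrow> nat" where
  "hub I = prod_encode (1, set_encode I)"

definition mid :: "nat set \<Rightarrow> nat \<Rightarrow> nat \<Rightarrow> nat" where
  "mid I i t = prod_encode (2, prod_encode (set_encode I, prod_encode (i, t)))"

definition vertex_case ::
    "(nat \<Rightarrow> 'b) \<Rightarrow> (nat set \<Rightarrow> 'b) \<Rightarrow> (nat set \<Rightarrow> nat \<Rightarrow> nat \<Rightarrow> 'b) \<Rightarrow> nat \<Rightarrow> 'b" where
  "vertex_case fl fh fm v =
     (let (tag, x) = prod_decode v in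
      if tag = 0 then fl x
      else if tag = 1 then fh (set_decode x)
      else (let (a, y) = prod_decode x; (i, t) = prod_decode y in fm (set_decode a) i t))"

lemma vertex_case_leaf [simp]: "vertex_case fl fh fm (leaf i) = fl i"
  by (simp add: vertex_case_def leaf_def)

lemma vertex_case_hub [simp]: "finite I \<Longrightarrow> vertex_case fl fh fm (hub I) = fh I"
  by (simp add: vertex_case_def hub_def)

lemma vertex_case_mid [simp]: "finite I \<Longrightarrow> vertex_case fl fh fm (mid I i t) = fm I i t"
  by (simp add: vertex_case_def mid_def)

locale almost_constant_lengths =
  fixes k n :: nat and L :: "nat set \<Rightarrow> nat" and M A :: nat
  assumes two_le_k: "2 \<le> k" and k_less_n: "k < n"
    and L_bounds: "\<And>I. I \<in> ksubsets k n \<Longrightarrow> M \<le> L I \<and> L I \<le> M + A"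
    and spread: "k * A < M"
begin

definition path_vertex :: "nat set \<Rightarrow> nat \<Rightarrow> nat \<Rightarrow> nat" where
  "path_vertex I i t = (if t = 0 then hub I else if t = L I then leaf i else mid I i t)"

definition verts :: "nat set" where
  "verts = (\<Union>I\<in>ksubsets k n. \<Union>i\<in>I. path_vertex I i ` {..L I})"

definition edges :: "(nat \<times> nat) set" where
  "edges = (\<Union>I\<in>ksubsets k n. \<Union>i\<in>I. (\<lambda>t. (path_vertex I i t, path_vertex I i (Suc t))) ` {..<L I})"

definition height :: "nat \<Rightarrow> int" where
  "height = vertex_case (\<lambda>i. 0) (\<lambda>I. - int (L I)) (\<lambda>I i t. int t - int (L I))"

lemma L_pos: "I \<in> ksubsets k n \<Longrightarrow> 0 < L I"
  using L_bounds[of I] spread by auto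

lemma path_vertex_0 [simp]: "path_vertex I i 0 = hub I"
  by (simp add: path_vertex_def)

lemma path_vertex_L [simp]: "I \<in> ksubsets k n \<Longrightarrow> path_vertex I i (L I) = leaf i"
  using L_pos[of I] by (simp add: path_vertex_def)

lemma vertex_case_path_vertex:
  assumes "I \<in> ksubsets k n" "t \<le> L I" "fm I i 0 = fh I" "fm I i (L I) = fl i"
  shows "vertex_case fl fh fm (path_vertex I i t) = fm I i t"
  using assms ksubsetsD(1)[OF assms(1)] by (auto simp: path_vertex_def)

lemma path_edge:
  assumes "I \<in> ksubsets k n" "i \<in> I" "t < L I"
  shows "(path_vertex I i t, path_vertex I i (Suc t)) \<in> edges"
  unfolding edges_def using assms by blast

lemma height_edge:
  assumes "(u, v) \<in> edges"
  shows "height v = height u + 1"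
proof -
  have "height (path_vertex I i t) = int t - int (L I)" if "I \<in> ksubsets k n" "t \<le> L I" for I i t
    unfolding height_def by (rule vertex_case_path_vertex) (use that in auto)
  then show ?thesis
    using assms unfolding edges_def by auto
qed

lemma walk_along_path:
  assumes I: "I \<in> ksubsets k n" "i \<in> I"
  shows "t + s \<le> L I \<Longrightarrow> walk_cost k edges (path_vertex I i t) (path_vertex I i (t + s)) s"
proof (induction s arbitrary: t)
  case 0
  then show ?case by (simp add: walk_cost.nil)
next
  case (Suc s)
  then have "walk_cost k edges (path_vertex I i (Suc t)) (path_vertex I i (Suc t + s)) s"
    using Suc.IH[of "Suc t"] by simp
  from walk_cost.fwd[OF path_edge[OF I] this] show ?case
    using Suc.prems by simp
qed

lemma walk_against_path:
  assumes I: "I \<in> ksubsets k n" "i \<in> I"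
  shows "t + s \<le> L I \<Longrightarrow> walk_cost k edges (path_vertex I i (t + s)) (path_vertex I i t) (s * (k - 1))"
proof (induction s)
  case 0
  then show ?case by (simp add: walk_cost.nil)
next
  case (Suc s)
  then have "walk_cost k edges (path_vertex I i (t + s)) (path_vertex I i t) (s * (k - 1))"
    by simp
  from walk_cost.bwd[OF path_edge[OF I] this] show ?case
    using Suc.prems by (simp add: add.commute)
qed

lemma walk_hub_leaf:
  assumes "I \<in> ksubsets k n" "i \<in> I"
  shows "walk_cost k edges (hub I) (leaf i) (L I)" "walk_cost k edges (leaf i) (hub I) (L I * (k - 1))"
  using walk_along_path[OF assms, of 0 "L I"] walk_against_path[OF assms, of 0 "L I"] assms by simp_all

lemma walk_hub_hub:
  assumes "I \<in> ksubsets k n" "J \<in> ksubsets k n"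
  shows "\<exists>c. walk_cost k edges (hub I) (hub J) c"
proof -
  obtain i j where ij: "i \<in> I" "j \<in> J"
    using ksubsetsD(3)[OF assms(1)] ksubsetsD(3)[OF assms(2)] two_le_k by fastforce
  then have "i < n" "j < n"
    using ksubsetsD(2)[OF assms(1)] ksubsetsD(2)[OF assms(2)] by auto
  then obtain X where X: "X \<in> ksubsets k n" "i \<in> X" "j \<in> X"
    using ksubsets_containing two_le_k k_less_n by (metis less_imp_le)
  show ?thesis
    using walk_cost_trans[OF walk_cost_trans[OF walk_cost_trans
            [OF walk_hub_leaf(1)[OF assms(1) ij(1)] walk_hub_leaf(2)[OF X(1,2)]]
            walk_hub_leaf(1)[OF X(1,3)]] walk_hub_leaf(2)[OF assms(2) ij(2)]]
    by blast
qed

lemma verts_connected: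
  assumes "v \<in> verts" "w \<in> verts"
  shows "\<exists>c. walk_cost k edges v w c"
proof -
  obtain I i t where I: "I \<in> ksubsets k n" "i \<in> I" "t \<le> L I" and v: "v = path_vertex I i t"
    using assms(1) unfolding verts_def by auto
  obtain J j s where J: "J \<in> ksubsets k n" "j \<in> J" "s \<le> L J" and w: "w = path_vertex J j s"
    using assms(2) unfolding verts_def by auto
  obtain c where "walk_cost k edges (hub I) (hub J) c"
    using walk_hub_hub[OF I(1) J(1)] by blast
  then show ?thesis
    using walk_cost_trans[OF walk_cost_trans[OF walk_against_path[OF I(1,2), of 0 t]]
            walk_along_path[OF J(1,2), of 0 s]] I J v w by auto
qed

lemma leaf_in_verts:
  assumes "i < n"
  shows "leaf i \<in> verts"
proof -
  obtain X where X: "X \<in> ksubsets k n" "i \<in> X"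
    using ksubsets_containing[OF assms assms two_le_k] k_less_n by auto
  then have "path_vertex X i (L X) \<in> verts"
    unfolding verts_def by blast
  then show ?thesis
    using X by simp
qed

lemma ddist_edge:
  assumes e: "(v, w) \<in> edges"
  shows "ddist k edges v w = 1" "ddist k edges w v = k - 1"
proof -
  have "walk_cost k edges v w (0 + 1)" "walk_cost k edges w v (0 + (k - 1))"
    by (intro walk_cost.fwd[OF e] walk_cost.bwd[OF e] walk_cost.nil)+
  moreover have "1 \<le> c" if "walk_cost k edges v w c" for c
    using walk_cost_height[where h = height, OF height_edge that] height_edge[OF e] two_le_k by auto
  moreover have "k - 1 \<le> c" if "walk_cost k edges w v c" for c
    using walk_cost_height[where h = height, OF height_edge that] height_edge[OF e] by auto
  ultimately show "ddist k edges v w = 1" "ddist k edges w v = k - 1"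
    unfolding ddist_def by (auto intro!: Least_equality)
qed

lemma finite_verts: "finite verts"
  unfolding verts_def using finite_ksubsets by (auto dest: ksubsetsD(1))

lemma valid_quiver_star: "valid_quiver k n verts edges leaf"
  unfolding valid_quiver_def
proof (intro conjI ballI allI impI)
  show "finite verts"
    by (rule finite_verts)
  show "edges \<subseteq> verts \<times> verts"
    unfolding edges_def verts_def by fastforce
  show "(v, v) \<notin> edges" for v
    using height_edge[of v v] by auto
qed (auto simp: leaf_in_verts verts_connected ddist_edge)

lemma has_coloring_star: "has_coloring k verts edges"
  unfolding has_coloring_def by (rule exI[of _ height]) (auto simp: height_edge)

section \<open>Distance sums in the star quiver\<close>

definition pair_len :: "nat \<Rightarrow> nat \<Rightarrow> nat" where
  "pair_len i j = Min (L ` {X \<in> ksubsets k n. i \<in> X \<and> j \<in> X})"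

text \<open>\<open>pot j\<close> vanishes at \<open>leaf j\<close> and changes by at most \<open>1\<close> along and \<open>k - 1\<close> against
  every edge, so it bounds the distance to \<open>leaf j\<close> from below. Its values at hubs and leaves
  are as large as this permits, which makes \<open>\<Sum>j\<in>J. pot j\<close> at least \<open>k * L J\<close> everywhere.\<close>

definition leaf_pot :: "nat \<Rightarrow> nat \<Rightarrow> int" where
  "leaf_pot j i = (if i = j then 0 else int k * int (pair_len i j))"

definition hub_pot :: "nat \<Rightarrow> nat set \<Rightarrow> int" where
  "hub_pot j I = (if j \<in> I then int (L I) else int (k + 1) * int M)"

definition path_pot :: "nat \<Rightarrow> nat set \<Rightarrow> nat \<Rightarrow> nat \<Rightarrow> int" where
  "path_pot j I i t = min (hub_pot j I + int (k - 1) * int t) (leaf_pot j i + int (L I) - int t)"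

definition pot :: "nat \<Rightarrow> nat \<Rightarrow> int" where
  "pot j = vertex_case (leaf_pot j) (hub_pot j) (path_pot j)"

lemma pair_len_bounds:
  assumes "i < n" "j < n"
  shows "M \<le> pair_len i j \<and> pair_len i j \<le> M + A"
proof -
  let ?S = "{X \<in> ksubsets k n. i \<in> X \<and> j \<in> X}"
  have "?S \<noteq> {}"
    using ksubsets_containing[OF assms two_le_k] k_less_n by (metis (mono_tags) empty_iff less_imp_le mem_Collect_eq)
  then have "pair_len i j \<in> L ` ?S"
    unfolding pair_len_def using finite_ksubsets by (intro Min_in) auto
  then show ?thesis
    using L_bounds by auto
qed

lemma pair_len_le:
  assumes "X \<in> ksubsets k n" "i \<in> X" "j \<in> X"
  shows "pair_len i j \<le> L X"
  unfolding pair_len_def using assms finite_ksubsets by (intro Min_le) auto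

lemma pair_len_card_2:
  assumes "k = 2" "X \<in> ksubsets k n" "i \<in> X" "j \<in> X" "i \<noteq> j"
  shows "pair_len i j = L X"
proof -
  have "Y = {i, j}" if "Y \<in> ksubsets k n" "i \<in> Y" "j \<in> Y" for Y
  proof -
    have "{i, j} \<subseteq> Y" "card {i, j} = card Y"
      using that ksubsetsD(3)[OF that(1)] assms(1,5) by auto
    from card_subset_eq[OF ksubsetsD(1)[OF that(1)] this] show ?thesis
      by simp
  qed
  then have "{Y \<in> ksubsets k n. i \<in> Y \<and> j \<in> Y} = {X}"
    using assms(2-4) by blast
  then show ?thesis
    unfolding pair_len_def by simp
qed

lemma pair_len_lower_bound:
  assumes X: "X \<in> ksubsets k n" "i \<in> X" "j \<in> X" "i \<noteq> j"
  shows "k * L X \<le> k * pair_len i j + (k - 2) * M \<and> 2 * L X \<le> k * pair_len i j"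
proof (cases "k = 2")
  case True
  then show ?thesis
    using pair_len_card_2[OF True X] by simp
next
  case False
  then have k3: "3 \<le> k"
    using two_le_k by simp
  have "i < n" "j < n"
    using ksubsetsD(2)[OF X(1)] X(2,3) by auto
  then have "M \<le> pair_len i j"
    using pair_len_bounds by blast
  then have "k * M \<le> k * pair_len i j"
    by simp
  moreover have "1 \<le> k - 2"
    using k3 by simp
  then have "M \<le> (k - 2) * M"
    using mult_le_mono1[of 1 "k - 2" M] by simp
  moreover have "3 * M \<le> k * M" "3 * A \<le> k * A"
    using k3 by simp_all
  moreover have "k * L X \<le> k * M + k * A"
    using L_bounds[OF X(1)] by (metis add_mult_distrib2 mult_le_mono2)
  ultimately show ?thesis
    using spread L_bounds[OF X(1)] by linarith
qed

lemma path_pot_0: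
  assumes I: "I \<in> ksubsets k n" "i \<in> I" and j: "j < n"
  shows "path_pot j I i 0 = hub_pot j I"
proof -
  have "hub_pot j I \<le> leaf_pot j i + int (L I)"
  proof (cases "j \<in> I")
    case True
    then show ?thesis by (simp add: hub_pot_def leaf_pot_def)
  next
    case False
    have "i < n"
      using ksubsetsD(2)[OF I(1)] I(2) by auto
    then have "k * M \<le> k * pair_len i j" "M \<le> L I"
      using pair_len_bounds[OF _ j] L_bounds[OF I(1)] by auto
    have "(k + 1) * M = k * M + M"
      by simp
    also have "\<dots> \<le> k * pair_len i j + L I"
      by (rule add_mono) fact+
    finally have "(k + 1) * M \<le> k * pair_len i j + L I" .
    then have "int (k + 1) * int M \<le> int k * int (pair_len i j) + int (L I)"
      by (metis of_nat_add of_nat_le_iff of_nat_mult)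
    then show ?thesis
      using False I(2) by (auto simp: hub_pot_def leaf_pot_def)
  qed
  then show ?thesis
    unfolding path_pot_def by simp
qed

lemma path_pot_L:
  assumes I: "I \<in> ksubsets k n" "i \<in> I" and j: "j < n"
  shows "path_pot j I i (L I) = leaf_pot j i"
proof -
  have i: "i < n"
    using ksubsetsD(2)[OF I(1)] I(2) by auto
  have "int k * int (pair_len i j) \<le> hub_pot j I + int (k - 1) * int (L I)"
  proof (cases "j \<in> I")
    case True
    have "k * pair_len i j \<le> k * L I"
      using pair_len_le[OF I True] by simp
    also have "\<dots> = L I + (k - 1) * L I"
      using two_le_k by (cases k) auto
    finally have "int k * int (pair_len i j) \<le> int (L I) + int (k - 1) * int (L I)"
      by (metis of_nat_add of_nat_le_iff of_nat_mult)
    then show ?thesis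
      using True by (simp add: hub_pot_def)
  next
    case False
    have "k * pair_len i j \<le> k * M + k * A"
      using pair_len_bounds[OF i j] by (metis add_mult_distrib2 mult_le_mono2)
    then have "k * pair_len i j \<le> (k + 1) * M + (k - 1) * L I"
      using spread by simp
    then have "int k * int (pair_len i j) \<le> int (k + 1) * int M + int (k - 1) * int (L I)"
      by (metis of_nat_add of_nat_le_iff of_nat_mult)
    then show ?thesis
      using False by (simp add: hub_pot_def)
  qed
  moreover have "0 \<le> hub_pot j I + int (k - 1) * int (L I)"
    by (simp add: hub_pot_def)
  ultimately have "leaf_pot j i \<le> hub_pot j I + int (k - 1) * int (L I)"
    unfolding leaf_pot_def by simp
  then show ?thesis
    unfolding path_pot_def by simp
qed

lemma pot_path_vertex:
  assumes "I \<in> ksubsets k n" "i \<in> I" "j < n" "t \<le> L I"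
  shows "pot j (path_vertex I i t) = path_pot j I i t"
  unfolding pot_def by (rule vertex_case_path_vertex) (use assms path_pot_0 path_pot_L in auto)

lemma pot_edge:
  assumes j: "j < n" and e: "(u, v) \<in> edges"
  shows "pot j u \<le> pot j v + 1 \<and> pot j v \<le> pot j u + int (k - 1)"
proof -
  obtain I i t where I: "I \<in> ksubsets k n" "i \<in> I" "t < L I"
    and uv: "u = path_vertex I i t" "v = path_vertex I i (Suc t)"
    using e unfolding edges_def by auto
  then have "pot j u = min (hub_pot j I + int (k - 1) * int t) (leaf_pot j i + int (L I) - int t)"
    "pot j v = min (hub_pot j I + int (k - 1) * (int t + 1)) (leaf_pot j i + int (L I) - (int t + 1))"
    using pot_path_vertex[OF I(1,2) j] by (simp_all add: path_pot_def add.commute)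
  then show ?thesis
    by (simp only:) (rule min_affine_step, simp)
qed

lemma pot_le_ddist:
  assumes j: "j < n" and x: "x \<in> verts"
  shows "pot j x \<le> int (ddist k edges x (leaf j))"
proof -
  obtain c where "walk_cost k edges x (leaf j) c"
    using verts_connected[OF x leaf_in_verts[OF j]] by blast
  from ddist_potential[where \<phi> = "pot j", OF pot_edge[OF j] this] show ?thesis
    by (simp add: pot_def leaf_pot_def)
qed

lemma path_pot_self:
  assumes "I \<in> ksubsets k n" "i \<in> I"
  shows "path_pot i I i t = int (L I) - int t"
proof -
  have "0 \<le> int (k - 1) * int t"
    by simp
  then have "min (int (L I) + int (k - 1) * int t) (int (L I) - int t) = int (L I) - int t"
    by (intro min_absorb2) linarith
  then show ?thesis
    using assms unfolding path_pot_def hub_pot_def leaf_pot_def by simp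
qed

lemma path_pot_member:
  assumes I: "I \<in> ksubsets k n" "i \<in> I" "t \<le> L I" and j: "j \<in> I" "j \<noteq> i"
  shows "int (L I) + int t \<le> path_pot j I i t"
proof -
  have "2 * L I \<le> k * pair_len i j"
    using pair_len_lower_bound[OF I(1,2) j(1)] j(2) by auto
  then have "2 * int (L I) \<le> int k * int (pair_len i j)"
    by (metis of_nat_le_iff of_nat_mult of_nat_numeral)
  moreover have "int t \<le> int (k - 1) * int t"
    using two_le_k by (simp add: mult_le_cancel_right1)
  ultimately show ?thesis
    unfolding path_pot_def hub_pot_def leaf_pot_def using j I(3) by auto
qed

lemma path_pot_nonmember:
  assumes I: "I \<in> ksubsets k n" "i \<in> I" "t \<le> L I" and j: "j \<notin> I" "j < n"
  shows "int (k + 1) * int M \<le> path_pot j I i t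
         \<or> int k * int (pair_len i j) + int (L I) - int t \<le> path_pot j I i t"
  using assms unfolding path_pot_def hub_pot_def leaf_pot_def by (auto simp: min_def)

lemma path_pot_ge_M:
  assumes I: "I \<in> ksubsets k n" "i \<in> I" "t \<le> L I" and j: "j < n" "j \<noteq> i"
  shows "int M \<le> path_pot j I i t"
proof (cases "j \<in> I")
  case True
  then show ?thesis
    using path_pot_member[OF I True j(2)] L_bounds[OF I(1)] by linarith
next
  case False
  have i: "i < n"
    using ksubsetsD(2)[OF I(1)] I(2) by auto
  have "1 * M \<le> k * pair_len i j"
    using two_le_k pair_len_bounds[OF i j(1)] by (intro mult_le_mono) auto
  then have "M \<le> k * pair_len i j" "M \<le> (k + 1) * M"
    by simp_all
  then have "int M \<le> int k * int (pair_len i j)" "int M \<le> int (k + 1) * int M"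
    by (metis of_nat_le_iff of_nat_mult)+
  then show ?thesis
    using path_pot_nonmember[OF I False j(1)] I(3) by linarith
qed

lemma sum_path_pot_ge:
  assumes I: "I \<in> ksubsets k n" "i \<in> I" "t \<le> L I" and J: "J \<in> ksubsets k n"
  shows "int k * int (L J) \<le> (\<Sum>j\<in>J. path_pot j I i t)"
proof -
  have J': "finite J" "card J = k" "J \<subseteq> {0..<n}"
    using ksubsetsD[OF J] by auto
  have i: "i < n"
    using ksubsetsD(2)[OF I(1)] I(2) by auto
  have at_least_M: "int (card R) * int M \<le> (\<Sum>j\<in>R. path_pot j I i t)" if "R \<subseteq> J" "i \<notin> R" for R
    by (rule sum_bounded_below, rule path_pot_ge_M[OF I]) (use that J'(3) in auto)
  have "k * L J \<le> k * M + k * A"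
    using L_bounds[OF J] by (metis add_mult_distrib2 mult_le_mono2)
  then have LJ: "int k * int (L J) \<le> int k * int M + int k * int A"
    by (metis of_nat_add of_nat_le_iff of_nat_mult)
  have kA: "int k * int A + 1 \<le> int M"
    using spread by (simp flip: of_nat_mult)
  have Suc_k: "int (k + 1) * int M = int k * int M + int M"
    by (simp add: algebra_simps)
  have pi: "path_pot i I i t = int (L I) - int t"
    by (rule path_pot_self[OF I(1,2)])
  show ?thesis
  proof (cases "J = I")
    case True
    have "int (card (J - {i})) * (int (L I) + int t) \<le> (\<Sum>j\<in>J - {i}. path_pot j I i t)"
      by (rule sum_bounded_below) (use path_pot_member[OF I] True in auto)
    moreover have "card (J - {i}) = k - 1"
      using True I(2) J' by simp
    ultimately have "int (k - 1) * int (L I) + int (k - 1) * int t \<le> (\<Sum>j\<in>J - {i}. path_pot j I i t)"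
      by (simp add: distrib_left)
    moreover have "(\<Sum>j\<in>J. path_pot j I i t) = path_pot i I i t + (\<Sum>j\<in>J - {i}. path_pot j I i t)"
      using True I(2) J'(1) by (simp add: sum.remove)
    moreover have "int t \<le> int (k - 1) * int t"
      using two_le_k by (simp add: mult_le_cancel_right1)
    moreover have "int k * int (L J) = int (k - 1) * int (L I) + int (L I)"
      using two_le_k True by (simp add: algebra_simps)
    ultimately show ?thesis
      using pi by linarith
  next
    case False
    then obtain j0 where j0: "j0 \<in> J" "j0 \<notin> I"
      using card_subset_eq[OF ksubsetsD(1)[OF I(1)]] ksubsetsD(3)[OF I(1)] J'(2) by blast
    have j0n: "j0 < n" and ij0: "i \<noteq> j0"
      using J'(3) j0 I(2) by auto
    have pj0: "int (k + 1) * int M \<le> path_pot j0 I i t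
               \<or> int k * int (pair_len i j0) + int (L I) - int t \<le> path_pot j0 I i t"
      by (rule path_pot_nonmember[OF I j0(2) j0n])
    have "k * M \<le> k * pair_len i j0"
      using pair_len_bounds[OF i j0n] by simp
    then have pl: "int k * int M \<le> int k * int (pair_len i j0)"
      by (metis of_nat_le_iff of_nat_mult)
    have split_j0: "(\<Sum>j\<in>J. path_pot j I i t) = path_pot j0 I i t + (\<Sum>j\<in>J - {j0}. path_pot j I i t)"
      using j0(1) J'(1) by (simp add: sum.remove)
    show ?thesis
    proof (cases "i \<in> J")
      case False
      have "int (card (J - {j0})) * int M \<le> (\<Sum>j\<in>J - {j0}. path_pot j I i t)"
        by (rule at_least_M) (use False in auto)
      moreover have "card (J - {j0}) = k - 1" "int M \<le> int (k - 1) * int M"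
        using j0(1) J' two_le_k by (simp_all add: mult_le_cancel_right1)
      ultimately have "int M \<le> (\<Sum>j\<in>J - {j0}. path_pot j I i t)"
        by simp
      with pj0 show ?thesis
        using split_j0 pl LJ kA Suc_k I(3) by (elim disjE) linarith+
    next
      case True
      have "card (J - {j0} - {i}) = k - 2"
        using j0 ij0 True J' by simp
      then have rest: "int (k - 2) * int M \<le> (\<Sum>j\<in>J - {j0} - {i}. path_pot j I i t)"
        using at_least_M[of "J - {j0} - {i}"] by auto
      have split_i: "(\<Sum>j\<in>J - {j0}. path_pot j I i t)
                     = path_pot i I i t + (\<Sum>j\<in>J - {j0} - {i}. path_pot j I i t)"
        using True ij0 J'(1) by (intro sum.remove) auto
      have "k * L J \<le> k * pair_len i j0 + (k - 2) * M"
        using pair_len_lower_bound[OF J True j0(1) ij0] by simp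
      then have lower: "int k * int (L J) \<le> int k * int (pair_len i j0) + int (k - 2) * int M"
        by (metis of_nat_add of_nat_le_iff of_nat_mult)
      have "0 \<le> int (k - 2) * int M" "int t \<le> int (L I)"
        using I(3) by simp_all
      with pj0 show ?thesis
        using rest split_i split_j0 pi lower LJ kA Suc_k by (elim disjE) linarith+
    qed
  qed
qed

lemma fl_sum_star:
  assumes J: "J \<in> ksubsets k n"
  shows "fl_sum k verts edges leaf J = k * L J"
proof -
  let ?f = "\<lambda>x. \<Sum>j\<in>J. ddist k edges x (leaf j)"
  have J': "finite J" "card J = k" "J \<subseteq> {0..<n}"
    using ksubsetsD[OF J] by auto
  have lower: "k * L J \<le> ?f x" if "x \<in> verts" for x
  proof -
    obtain I i t where I: "I \<in> ksubsets k n" "i \<in> I" "t \<le> L I" and x: "x = path_vertex I i t"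
      using \<open>x \<in> verts\<close> unfolding verts_def by auto
    have "int (k * L J) \<le> (\<Sum>j\<in>J. path_pot j I i t)"
      using sum_path_pot_ge[OF I J] by simp
    also have "\<dots> = (\<Sum>j\<in>J. pot j x)"
      using pot_path_vertex[OF I(1,2) _ I(3)] J'(3) x by (intro sum.cong) auto
    also have "\<dots> \<le> (\<Sum>j\<in>J. int (ddist k edges x (leaf j)))"
      using pot_le_ddist[OF _ that] J'(3) by (intro sum_mono) auto
    also have "\<dots> = int (?f x)"
      by simp
    finally show ?thesis
      by (simp only: of_nat_le_iff)
  qed
  obtain j1 where j1: "j1 \<in> J"
    using J'(2) two_le_k by fastforce
  have "path_vertex J j1 0 \<in> verts"
    unfolding verts_def using J j1 by blast
  then have hub: "hub J \<in> verts"
    by simp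
  have "?f (hub J) \<le> (\<Sum>j\<in>J. L J)"
    using ddist_le[OF walk_hub_leaf(1)[OF J]] by (intro sum_mono) auto
  then have "?f (hub J) = k * L J"
    using J'(2) lower[OF hub] by simp
  show ?thesis
    unfolding fl_sum_def
  proof (rule Min_eqI)
    show "finite (?f ` verts)"
      using finite_verts by simp
    show "k * L J \<le> y" if "y \<in> ?f ` verts" for y
      using lower that by auto
    have "?f (hub J) \<in> ?f ` verts"
      using hub by (rule imageI)
    then show "k * L J \<in> ?f ` verts"
      using \<open>?f (hub J) = k * L J\<close> by simp
  qed
qed

lemma trop_pluecker_star:
  assumes "I \<in> ksubsets k n"
  shows "trop_pluecker k verts edges leaf I = - real (L I)"
  using fl_sum_star[OF assms] two_le_k by (simp add: trop_pluecker_def)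

end

lemma integral_point_as_lengths:
  assumes k: "2 \<le> k" "k < n" and int: "integral_mod_lineality k n \<pi>"
  obtains L M A lam where "almost_constant_lengths k n L M A"
    and "\<forall>I\<in>ksubsets k n. - real (L I) = \<pi> I + lineality_vec lam I"
proof -
  obtain lam0 where lam0: "\<forall>I\<in>ksubsets k n. \<pi> I + lineality_vec lam0 I \<in> \<int>"
    using int unfolding integral_mod_lineality_def by blast
  define p where "p I = \<lfloor>\<pi> I + lineality_vec lam0 I\<rfloor>" for I
  have p: "real_of_int (p I) = \<pi> I + lineality_vec lam0 I" if "I \<in> ksubsets k n" for I
    using lam0 that unfolding p_def by (auto elim!: Ints_cases)
  define P where "P = Max (p ` ksubsets k n)"
  define A where "A = nat (P - Min (p ` ksubsets k n))"
  define M where "M = k * A + 1"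
  define L where "L I = nat (int M + P - p I)" for I
  have p_bounds: "P - int A \<le> p I \<and> p I \<le> P" if "I \<in> ksubsets k n" for I
  proof -
    have "Min (p ` ksubsets k n) \<le> p I" "p I \<le> P"
      using that finite_ksubsets unfolding P_def by auto
    moreover have "int A = P - Min (p ` ksubsets k n)"
      using calculation unfolding A_def by simp
    ultimately show ?thesis
      by linarith
  qed
  have L: "int (L I) = int M + P - p I" if "I \<in> ksubsets k n" for I
    using p_bounds[OF that] unfolding L_def by simp
  have "M \<le> L I \<and> L I \<le> M + A" if "I \<in> ksubsets k n" for I
    using L[OF that] p_bounds[OF that] by linarith
  then have "almost_constant_lengths k n L M A"
    by unfold_locales (use k in \<open>auto simp: M_def\<close>)
  moreover have "- real (L I) = \<pi> I + lineality_vec (\<lambda>i. lam0 i - real_of_int (int M + P) / real k) I"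
    if "I \<in> ksubsets k n" for I
  proof -
    have "lineality_vec (\<lambda>i. lam0 i - real_of_int (int M + P) / real k) I
          = lineality_vec lam0 I - real_of_int (int M + P)"
      using ksubsetsD(3)[OF that] k by (simp add: lineality_vec_def sum_subtractf)
    moreover have "real (L I) = real_of_int (int M + P - p I)"
      using L[OF that] by (metis of_int_of_nat_eq)
    ultimately show ?thesis
      using p[OF that] by simp
  qed
  ultimately show ?thesis
    using that by blast
qed

theorem theorem3p14:
  fixes k n :: nat and \<pi> :: "nat set \<Rightarrow> real"
  assumes "2 \<le> k" and "k < n"
    and "\<pi> \<in> trop_gr k n"
    and "integral_mod_lineality k n \<pi>"
  shows "\<exists>V E z. weak_scaffold k n V E z \<and>
           equiv_mod_lineality k n (trop_pluecker k V E z) \<pi>"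
proof -
  obtain L M A lam where lengths: "almost_constant_lengths k n L M A"
    and L: "\<forall>I\<in>ksubsets k n. - real (L I) = \<pi> I + lineality_vec lam I"
    using integral_point_as_lengths assms(1,2,4) by blast
  interpret almost_constant_lengths k n L M A
    by (rule lengths)
  have trop: "\<forall>I\<in>ksubsets k n. trop_pluecker k verts edges leaf I = \<pi> I + lineality_vec lam I"
    using L trop_pluecker_star by simp
  have "\<pi> \<in> dressian k n"
    using trop_gr_subset_dressian assms(1,3) by blast
  then have "trop_pluecker k verts edges leaf \<in> dressian k n"
    using dressian_add_lineality assms(1) trop by blast
  then have "weak_scaffold k n verts edges leaf"
    unfolding weak_scaffold_def using valid_quiver_star has_coloring_star by blast
  moreover have "equiv_mod_lineality k n (trop_pluecker k verts edges leaf) \<pi>"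
    unfolding equiv_mod_lineality_def using trop by blast
  ultimately show ?thesis by blast
qed

end
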